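(* Let $f:\mathbb{N}_+\to\mathbb{N}_+$. Then $L_{I(A_f)}(A_f)(x)=L_{\mathbb{N}_+}\big(n\mapsto\sum_{k=1}^n f(k)\big)^{-1}(x)$ for all $x\in\mathbb{R}_{\ge0}$.
   Context: The sequence "$n$ occurs $f(n)$ times", $A_f$, is defined by $A_f\big(m+\sum_{k=1}^n f(k)\big)=n$ for all integers $n\ge1$ and $0\le m<f(n+1)$, with the convention $A_f(m)=0$ for $0\le m<f(1)$. Its set of increase-indices is $I(A_f)=\{n\in\mathbb{N}_+: A_f(n-1)<A_f(n)\}$ (which equals $\{\sum_{k=1}^n f(k): n\ge1\}$). For a function $h$ defined on an infinite set $S\subseteq\mathbb{N}_+$ with values in $\mathbb{N}$, the linear interpolation $L_S(h):\mathbb{R}_{\ge0}\to\mathbb{R}_{\ge0}$ is the polygonal chain starting at $(0,0)$ and passing through the points $(n,h(n))$, $n\in S$, in increasing order of $n$. $L_{\mathbb{N}_+}(n\mapsto\sum_{k=1}^n f(k))$ is strictly increasing and unbounded, hence invertible on $\mathbb{R}_{\ge0}$. *)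

theory Defs
  imports "HOL-Analysis.Analysis" "HOL-Library.Infinite_Set"
begin

definition psum :: "(nat \<Rightarrow> nat) \<Rightarrow> nat \<Rightarrow> nat" where
  "psum f n = (\<Sum>k=1..n. f k)"

text \<open>The sequence "n occurs f(n) times": A_f(m + S_f(n)) = n for n >= 1, 0 <= m < f(n+1),
  and A_f(m) = 0 for 0 <= m < f(1).\<close>
definition seqA :: "(nat \<Rightarrow> nat) \<Rightarrow> nat \<Rightarrow> nat" where
  "seqA f m = (THE n. (n = 0 \<and> m < f 1) \<or>
                      (n \<ge> 1 \<and> (\<exists>m'. m' < f (n + 1) \<and> m = m' + psum f n)))"

definition incr_indices :: "(nat \<Rightarrow> nat) \<Rightarrow> nat set" where
  "incr_indices a = {n. n \<ge> 1 \<and> a (n - 1) < a n}"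

text \<open>Polygonal chain through the points (xs i, ys i), i = 0,1,2,..., with xs strictly
  increasing and unbounded: on [xs i, xs (i+1)) it is the segment joining the two points.\<close>
definition polygonal :: "(nat \<Rightarrow> real) \<Rightarrow> (nat \<Rightarrow> real) \<Rightarrow> real \<Rightarrow> real" where
  "polygonal xs ys x = (let i = (THE i. xs i \<le> x \<and> x < xs (Suc i)) in
      ys i + (ys (Suc i) - ys i) * (x - xs i) / (xs (Suc i) - xs i))"

text \<open>Linear interpolation L_S(h): the polygonal chain starting at (0,0) and passing through
  the points (n, h n), n in S, in increasing order of n (S an infinite subset of N_+;
  enumerate S lists the elements of S in increasing order).\<close>
definition lin_interp :: "nat set \<Rightarrow> (nat \<Rightarrow> nat) \<Rightarrow> real \<Rightarrow> real" where
  "lin_interp S h = polygonal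
      (\<lambda>i. if i = 0 then 0 else real (enumerate S (i - 1)))
      (\<lambda>i. if i = 0 then 0 else real (h (enumerate S (i - 1))))"

end

theory Submission
  imports Defs
begin

(* A_f is constant equal to n on [S_f(n), S_f(n+1)), so its increase-indices are the partial
   sums S_f(n), n >= 1, where it takes the value n.  Hence L_{I(A_f)}(A_f) is the polygonal chain
   through the points (S_f(n), n), while L_{N+}(S_f) is the one through (n, S_f(n)).  Reflecting
   a polygonal chain with strictly increasing vertex coordinates in the diagonal yields the
   inverse function, segment by segment. *)

lemma enumerate_range_strict_mono:
  fixes g :: "nat \<Rightarrow> nat"
  assumes g: "strict_mono g"
  shows "enumerate (range g) n = g n"
proof (induction n)
  case 0
  have "(LEAST n. n \<in> range g) = g 0"
    using g by (intro Least_equality) (auto simp: strict_mono_less_eq)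
  then show ?case by (simp add: enumerate_0)
next
  case (Suc n)
  have "infinite (range g)"
    using strict_mono_imp_inj_on[OF g] finite_imageD by blast
  moreover have "(LEAST s. s \<in> range g \<and> g n < s) = g (Suc n)"
    using g by (intro Least_equality) (auto simp: strict_mono_less strict_mono_less_eq Suc_le_eq)
  ultimately show ?case using Suc enumerate_Suc'' by metis
qed

lemma lin_interp_range_strict_mono:
  assumes "strict_mono g"
  shows "lin_interp (range g) h =
    polygonal (\<lambda>i. if i = 0 then 0 else real (g (i - 1)))
              (\<lambda>i. if i = 0 then 0 else real (h (g (i - 1))))"
  unfolding lin_interp_def enumerate_range_strict_mono[OF assms] ..

lemma bracket_exists:
  fixes s :: "nat \<Rightarrow> 'a::linorder"
  assumes "s 0 \<le> x" and "x < s k"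
  shows "\<exists>i. s i \<le> x \<and> x < s (Suc i)"
  using assms(2)
proof (induction k)
  case 0
  with assms(1) show ?case by simp
next
  case (Suc k)
  then show ?case by (cases "x < s k") (auto simp: not_less)
qed

lemma bracket_unique:
  fixes s :: "nat \<Rightarrow> 'a::linorder"
  assumes "mono s"
    and "s i \<le> x" "x < s (Suc i)" and "s j \<le> x" "x < s (Suc j)"
  shows "i = j"
proof -
  have "\<not> i < j" if "x < s (Suc i)" "s j \<le> x" for i j
    using that monoD[OF \<open>mono s\<close>, of "Suc i" j] by (auto simp: Suc_le_eq)
  then show ?thesis using assms(2-5) by (meson linorder_neqE_nat)
qed

lemma polygonal_on_segment:
  assumes "mono xs" and "xs i \<le> x" "x < xs (Suc i)"
  shows "polygonal xs ys x = ys i + (ys (Suc i) - ys i) * (x - xs i) / (xs (Suc i) - xs i)"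
proof -
  have "(THE i. xs i \<le> x \<and> x < xs (Suc i)) = i"
    using assms bracket_unique[OF assms(1)] by (intro the_equality) blast+
  then show ?thesis unfolding polygonal_def Let_def by simp
qed

lemma polygonal_segment_bounds:
  assumes xs: "strict_mono xs" and ys: "strict_mono ys" and x: "xs i \<le> x" "x < xs (Suc i)"
  shows "ys i \<le> polygonal xs ys x" "polygonal xs ys x < ys (Suc i)"
proof -
  define q where "q = (x - xs i) / (xs (Suc i) - xs i)"
  have "xs i < xs (Suc i)" "ys i < ys (Suc i)"
    using xs ys by (simp_all add: strict_mono_Suc_iff)
  then have q: "0 \<le> q" "q < 1" and dy: "0 < ys (Suc i) - ys i"
    using x by (simp_all add: q_def)
  have eq: "polygonal xs ys x = ys i + (ys (Suc i) - ys i) * q"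
    using polygonal_on_segment[OF strict_mono_mono[OF xs] x] by (simp add: q_def)
  show "ys i \<le> polygonal xs ys x"
    unfolding eq using q dy by simp
  have "(ys (Suc i) - ys i) * q < (ys (Suc i) - ys i) * 1"
    using q dy by (intro mult_strict_left_mono) auto
  then show "polygonal xs ys x < ys (Suc i)"
    unfolding eq by simp
qed

lemma inj_on_polygonal:
  assumes xs: "strict_mono xs" and ys: "strict_mono ys" and unbounded: "\<And>x. \<exists>k. x < xs k"
  shows "inj_on (polygonal xs ys) {xs 0..}"
proof (rule inj_onI)
  fix a b assume "a \<in> {xs 0..}" "b \<in> {xs 0..}" and eq: "polygonal xs ys a = polygonal xs ys b"
  then obtain i j where a: "xs i \<le> a" "a < xs (Suc i)" and b: "xs j \<le> b" "b < xs (Suc j)"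
    using bracket_exists unbounded by (metis atLeast_iff)
  have "i = j"
    using polygonal_segment_bounds[OF xs ys a] polygonal_segment_bounds[OF xs ys b] eq
    by (intro bracket_unique[OF strict_mono_mono[OF ys]]) auto
  moreover have "xs i < xs (Suc i)" "ys i < ys (Suc i)"
    using xs ys by (simp_all add: strict_mono_Suc_iff)
  ultimately show "a = b"
    using eq polygonal_on_segment[OF strict_mono_mono[OF xs] a, of ys]
      polygonal_on_segment[OF strict_mono_mono[OF xs] b, of ys] by simp
qed

lemma inv_into_polygonal:
  assumes xs: "strict_mono xs" and ys: "strict_mono ys" and unbounded: "\<And>x. \<exists>k. x < xs k"
    and y: "ys i \<le> y" "y < ys (Suc i)"
  shows "inv_into {xs 0..} (polygonal xs ys) y = polygonal ys xs y"
proof (rule inv_into_f_eq[OF inj_on_polygonal[OF xs ys unbounded]])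
  let ?t = "polygonal ys xs y"
  have t: "xs i \<le> ?t" "?t < xs (Suc i)"
    using polygonal_segment_bounds[OF ys xs y] by auto
  then show "?t \<in> {xs 0..}"
    using strict_mono_less_eq[OF xs, of 0 i] by simp
  have "xs i < xs (Suc i)" "ys i < ys (Suc i)"
    using xs ys by (simp_all add: strict_mono_Suc_iff)
  then show "polygonal xs ys ?t = y"
    using polygonal_on_segment[OF strict_mono_mono[OF xs] t, of ys]
      polygonal_on_segment[OF strict_mono_mono[OF ys] y, of xs] by simp
qed

lemma psum_0: "psum f 0 = 0"
  unfolding psum_def by simp

lemma psum_Suc: "psum f (Suc n) = psum f n + f (Suc n)"
  unfolding psum_def by simp

lemma strict_mono_psum:
  assumes "\<forall>n\<ge>1. f n \<ge> 1"
  shows "strict_mono (psum f)"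
  using assms by (simp add: strict_mono_Suc_iff psum_Suc Suc_le_eq)

lemma seqA_eqI:
  assumes pos: "\<forall>n\<ge>1. f n \<ge> 1"
    and m: "psum f n \<le> m" "m < psum f (Suc n)"
  shows "seqA f m = n"
  unfolding seqA_def
proof (rule the_equality)
  show "n = 0 \<and> m < f 1 \<or> 1 \<le> n \<and> (\<exists>m'<f (n + 1). m = m' + psum f n)"
    using m by (cases "n = 0") (auto simp: psum_0 psum_Suc intro!: exI[of _ "m - psum f n"])
next
  fix k assume "k = 0 \<and> m < f 1 \<or> 1 \<le> k \<and> (\<exists>m'<f (k + 1). m = m' + psum f k)"
  then have "psum f k \<le> m" "m < psum f (Suc k)"
    by (auto simp: psum_0 psum_Suc)
  then show "k = n"
    using bracket_unique[OF strict_mono_mono[OF strict_mono_psum[OF pos]]] m by blast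
qed

lemma seqA_psum:
  assumes "\<forall>n\<ge>1. f n \<ge> 1"
  shows "seqA f (psum f n) = n"
  using assms strict_mono_psum[OF assms] by (intro seqA_eqI) (auto simp: strict_mono_Suc_iff)

lemma seqA_psum_Suc_minus_1:
  assumes "\<forall>n\<ge>1. f n \<ge> 1"
  shows "seqA f (psum f (Suc n) - 1) = n"
proof -
  have "f (Suc n) \<ge> 1" using assms by simp
  then show ?thesis by (intro seqA_eqI[OF assms]) (simp_all add: psum_Suc)
qed

lemma incr_indices_seqA:
  assumes pos: "\<forall>n\<ge>1. f n \<ge> 1"
  shows "incr_indices (seqA f) = range (\<lambda>k. psum f (Suc k))"
proof (intro set_eqI iffI)
  fix n assume "n \<in> incr_indices (seqA f)"
  then have n: "n \<ge> 1" "seqA f (n - 1) < seqA f n"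
    by (auto simp: incr_indices_def)
  obtain j where j: "psum f j \<le> n" "n < psum f (Suc j)"
    using bracket_exists[of "psum f" n "Suc n"] psum_0
      strict_mono_imp_increasing[OF strict_mono_psum[OF pos], of "Suc n"] by auto
  have "n = psum f j"
  proof (rule ccontr)
    assume "n \<noteq> psum f j"
    then have "seqA f (n - 1) = seqA f n"
      using j seqA_eqI[OF pos] by simp
    with n show False by simp
  qed
  with n(1) show "n \<in> range (\<lambda>k. psum f (Suc k))"
    by (cases j) (auto simp: psum_0)
next
  fix n assume "n \<in> range (\<lambda>k. psum f (Suc k))"
  then obtain k where n: "n = psum f (Suc k)" by auto
  have "f (Suc k) \<ge> 1" using pos by simp
  then have "n \<ge> 1" using n by (simp add: psum_Suc)
  then show "n \<in> incr_indices (seqA f)"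
    using seqA_psum[OF pos, of "Suc k"] seqA_psum_Suc_minus_1[OF pos, of k]
    by (simp add: incr_indices_def n)
qed

lemma lin_interp_seqA:
  assumes pos: "\<forall>n\<ge>1. f n \<ge> 1"
  shows "lin_interp (incr_indices (seqA f)) (seqA f) = polygonal (\<lambda>i. real (psum f i)) real"
proof -
  have "strict_mono (\<lambda>k. psum f (Suc k))"
    using strict_mono_psum[OF pos] by (simp add: strict_mono_def)
  moreover have "(\<lambda>i. if i = 0 then 0 else real (psum f (Suc (i - 1)))) = (\<lambda>i. real (psum f i))"
    by (auto simp: psum_0)
  moreover have "(\<lambda>i. if i = 0 then 0 else real (seqA f (psum f (Suc (i - 1))))) = real"
    using seqA_psum[OF pos] by auto
  ultimately show ?thesis
    by (simp add: incr_indices_seqA[OF pos] lin_interp_range_strict_mono)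
qed

lemma lin_interp_psum: "lin_interp {1..} (psum f) = polygonal real (\<lambda>i. real (psum f i))"
proof -
  have "{1..} = range Suc"
    using atLeast_Suc_greaterThan[of 0] greaterThan_0 by simp
  moreover have "(\<lambda>i. if i = 0 then 0 else real (Suc (i - 1))) = real"
    by auto
  moreover have "(\<lambda>i. if i = 0 then 0 else real (psum f (Suc (i - 1)))) = (\<lambda>i. real (psum f i))"
    by (auto simp: psum_0)
  ultimately show ?thesis
    by (simp add: lin_interp_range_strict_mono strict_mono_Suc_iff)
qed

theorem lemma2:
  fixes f :: "nat \<Rightarrow> nat"
  assumes "\<forall>n\<ge>1. f n \<ge> 1"
  shows "\<forall>x::real. x \<ge> 0 \<longrightarrow>
    lin_interp (incr_indices (seqA f)) (seqA f) x
      = inv_into {0..} (lin_interp {1..} (psum f)) x"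
proof (intro allI impI)
  fix x :: real assume "x \<ge> 0"
  let ?S = "\<lambda>i. real (psum f i)"
  have S: "strict_mono ?S"
    using strict_mono_psum[OF assms] by (simp add: strict_mono_def)
  obtain k where "x < real k"
    using reals_Archimedean2 by blast
  also have "\<dots> \<le> ?S k"
    using strict_mono_imp_increasing[OF strict_mono_psum[OF assms]] by simp
  finally obtain i where "?S i \<le> x" "x < ?S (Suc i)"
    using bracket_exists[of ?S x k] \<open>x \<ge> 0\<close> by (auto simp: psum_0)
  then have "inv_into {0..} (polygonal real ?S) x = polygonal ?S real x"
    using inv_into_polygonal[of real ?S, OF _ S reals_Archimedean2] by (simp add: strict_mono_def)
  then show "lin_interp (incr_indices (seqA f)) (seqA f) x
      = inv_into {0..} (lin_interp {1..} (psum f)) x"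
    unfolding lin_interp_seqA[OF assms] lin_interp_psum by (rule sym)
qed

end
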